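(* Let $\mathcal{B}$ be a boolean algebra and let $\mathcal{M}$ be a well behaved $\mathcal{B}$-valued model for a relational language $\mathcal{L}$. The following are equivalent: (a) $\mathcal{M}$ is full; (b) for all $\mathcal{L}_{\mathcal{M}}$-formulae $\phi(x_0,x_1,\dots,x_n)$ and all $\tau_1,\dots,\tau_n\in M$ there exist $m\in\mathbb{N}$ and $\sigma_1,\dots,\sigma_m\in M$ such that \[\bigvee_{\tau\in M}[\![\phi(\tau,\tau_1,\dots,\tau_n)]\!]=\bigvee_{i=1}^m[\![\phi(\sigma_i,\tau_1,\dots,\tau_n)]\!].\]
   Context: Let $\mathcal{L}$ be a relational language (relation and constant symbols only) and $\mathcal{B}$ a boolean algebra. A $\mathcal{B}$-valued model $\mathcal{M}$ consists of a non-empty set $M$, a map $(\sigma,\tau)\mapsto[\![\sigma=\tau]\!]\in\mathcal{B}$, maps $(\sigma_1,\dots,\sigma_n)\mapsto[\![R(\sigma_1,\dots,\sigma_n)]\!]\in\mathcal{B}$ for each $n$-ary relation symbol $R$, and elements $c^{\mathcal{M}}\in M$ for each constant $c$, such that $[\![\sigma=\sigma]\!]=1$, $[\![\sigma=\tau]\!]=[\![\tau=\sigma]\!]$, $[\![\sigma=\tau]\!]\wedge[\![\tau=\pi]\!]\le[\![\sigma=\pi]\!]$ and $\bigwedge_i[\![\sigma_i=\tau_i]\!]\wedge[\![R(\vec\sigma)]\!]\le[\![R(\vec\tau)]\!]$. Formulas of $\mathcal{L}_{\mathcal{M}}=\mathcal{L}\cup\{c_\sigma:\sigma\in M\}$ without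 free variables are evaluated in the boolean completion $\mathrm{RO}(\mathcal{B}^+)$ of $\mathcal{B}$ (with $\mathcal{B}$ identified with a dense subalgebra): atomic ones as given, $[\![\varphi\wedge\psi]\!]=[\![\varphi]\!]\wedge[\![\psi]\!]$, $[\![\neg\varphi]\!]=\neg[\![\varphi]\!]$, $[\![\exists x\varphi(x)]\!]=\bigvee_{\tau\in M}[\![\varphi(\tau)]\!]$. $\mathcal{M}$ is well behaved if all these values lie in $\mathcal{B}$. For an ultrafilter $G$ on $\mathcal{B}$, $\mathcal{M}/_G$ is the two-valued structure with domain $\{[\sigma]_G:\sigma\in M\}$, where $[\sigma]_G=\{\tau\in M:[\![\tau=\sigma]\!]\in G\}$, in which $R([\sigma_1]_G,\dots,[\sigma_n]_G)$ holds iff $[\![R(\sigma_1,\dots,\sigma_n)]\!]\in G$, and constants are interpreted as $[c^{\mathcal{M}}]_G$. $\mathcal{M}$ is full if for every ultrafilter $G$ on $\mathcal{B}$, every formula $\phi(x_1,\dots,x_n)$ and all $\tau_1,\dots,\tau_n\in M$: $\mathcal{M}/_G\models\phi([\tau_1]_G,\dots,[\tau_n]_G)$ iff $[\![\phi(\tau_1,\dots,\tau_n)]\!]\in G$. *)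

theory Defs
  imports Main
begin

text \<open>Terms of a relational language L_M: variables, constant symbols of L,
  and the parameters c_sigma for sigma in M.\<close>
datatype ('c, 'm) trm = Var nat | Cst 'c | Par 'm

datatype ('r, 'c, 'm) fm =
    Eq "('c, 'm) trm" "('c, 'm) trm"
  | Rel 'r "('c, 'm) trm list"
  | And "('r, 'c, 'm) fm" "('r, 'c, 'm) fm"
  | Neg "('r, 'c, 'm) fm"
  | Ex nat "('r, 'c, 'm) fm"

fun wf :: "('r \<Rightarrow> nat) \<Rightarrow> ('r, 'c, 'm) fm \<Rightarrow> bool" where
  "wf ar (Eq t u) = True"
| "wf ar (Rel R ts) = (length ts = ar R)"
| "wf ar (And p q) = (wf ar p \<and> wf ar q)"
| "wf ar (Neg p) = wf ar p"
| "wf ar (Ex x p) = wf ar p"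

fun fv_trm :: "('c, 'm) trm \<Rightarrow> nat set" where
  "fv_trm (Var x) = {x}"
| "fv_trm (Cst c) = {}"
| "fv_trm (Par m) = {}"

fun fv :: "('r, 'c, 'm) fm \<Rightarrow> nat set" where
  "fv (Eq t u) = fv_trm t \<union> fv_trm u"
| "fv (Rel R ts) = (\<Union>t\<in>set ts. fv_trm t)"
| "fv (And p q) = fv p \<union> fv q"
| "fv (Neg p) = fv p"
| "fv (Ex x p) = fv p - {x}"

fun pars_trm :: "('c, 'm) trm \<Rightarrow> 'm set" where
  "pars_trm (Par m) = {m}"
| "pars_trm _ = {}"

text \<open>Parameters c_sigma occurring in a formula (empty iff it is an L-formula).\<close>
fun pars :: "('r, 'c, 'm) fm \<Rightarrow> 'm set" where
  "pars (Eq t u) = pars_trm t \<union> pars_trm u"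
| "pars (Rel R ts) = (\<Union>t\<in>set ts. pars_trm t)"
| "pars (And p q) = pars p \<union> pars q"
| "pars (Neg p) = pars p"
| "pars (Ex x p) = pars p"

fun substs_trm :: "(nat \<Rightarrow> 'm option) \<Rightarrow> ('c, 'm) trm \<Rightarrow> ('c, 'm) trm" where
  "substs_trm s (Var x) = (case s x of None \<Rightarrow> Var x | Some m \<Rightarrow> Par m)"
| "substs_trm s (Cst c) = Cst c"
| "substs_trm s (Par m) = Par m"

fun substs :: "(nat \<Rightarrow> 'm option) \<Rightarrow> ('r, 'c, 'm) fm \<Rightarrow> ('r, 'c, 'm) fm" where
  "substs s (Eq t u) = Eq (substs_trm s t) (substs_trm s u)"
| "substs s (Rel R ts) = Rel R (map (substs_trm s) ts)"
| "substs s (And p q) = And (substs s p) (substs s q)"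
| "substs s (Neg p) = Neg (substs s p)"
| "substs s (Ex x p) = Ex x (substs (s(x := None)) p)"

definition subst :: "nat \<Rightarrow> 'm \<Rightarrow> ('r, 'c, 'm) fm \<Rightarrow> ('r, 'c, 'm) fm" where
  "subst x \<sigma> p = substs ((\<lambda>_. None)(x := Some \<sigma>)) p"

fun fdepth :: "('r, 'c, 'm) fm \<Rightarrow> nat" where
  "fdepth (Eq t u) = 0"
| "fdepth (Rel R ts) = 0"
| "fdepth (And p q) = Suc (fdepth p + fdepth q)"
| "fdepth (Neg p) = Suc (fdepth p)"
| "fdepth (Ex x p) = Suc (fdepth p)"

lemma fdepth_substs [simp]: "fdepth (substs s p) = fdepth p"
  by (induction p arbitrary: s) auto

lemma fdepth_subst [simp]: "fdepth (subst x \<sigma> p) = fdepth p"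
  by (simp add: subst_def)

definition is_sup :: "'b::boolean_algebra set \<Rightarrow> 'b \<Rightarrow> bool" where
  "is_sup S b \<longleftrightarrow> (\<forall>a\<in>S. a \<le> b) \<and> (\<forall>c. (\<forall>a\<in>S. a \<le> c) \<longrightarrow> b \<le> c)"

fun tm :: "('c \<Rightarrow> 'm) \<Rightarrow> ('c, 'm) trm \<Rightarrow> 'm" where
  "tm cst (Var x) = undefined"
| "tm cst (Cst c) = cst c"
| "tm cst (Par m) = m"

text \<open>Boolean value of an L_M-sentence. The existential case is the supremum in B
  (whenever it exists; for well behaved models it always does).\<close>
function bv :: "('m \<Rightarrow> 'm \<Rightarrow> 'b::boolean_algebra) \<Rightarrow> ('r \<Rightarrow> 'm list \<Rightarrow> 'b) \<Rightarrow> ('c \<Rightarrow> 'm)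
    \<Rightarrow> ('r, 'c, 'm) fm \<Rightarrow> 'b" where
  "bv eq rel cst (Eq t u) = eq (tm cst t) (tm cst u)"
| "bv eq rel cst (Rel R ts) = rel R (map (tm cst) ts)"
| "bv eq rel cst (And p q) = inf (bv eq rel cst p) (bv eq rel cst q)"
| "bv eq rel cst (Neg p) = - bv eq rel cst p"
| "bv eq rel cst (Ex x p) = (THE b. is_sup (range (\<lambda>\<sigma>. bv eq rel cst (subst x \<sigma> p))) b)"
  by pat_completeness auto
termination
  by (relation "measure (\<lambda>(_, _, _, p). fdepth p)") auto

definition bvmodel :: "('r \<Rightarrow> nat) \<Rightarrow> ('m \<Rightarrow> 'm \<Rightarrow> 'b::boolean_algebra) \<Rightarrow> ('r \<Rightarrow> 'm list \<Rightarrow> 'b) \<Rightarrow> bool" where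
  "bvmodel ar eq rel \<longleftrightarrow>
     (\<forall>\<sigma>. eq \<sigma> \<sigma> = top) \<and>
     (\<forall>\<sigma> \<tau>. eq \<sigma> \<tau> = eq \<tau> \<sigma>) \<and>
     (\<forall>\<sigma> \<tau> \<pi>. inf (eq \<sigma> \<tau>) (eq \<tau> \<pi>) \<le> eq \<sigma> \<pi>) \<and>
     (\<forall>R \<sigma>s \<tau>s. length \<sigma>s = ar R \<and> length \<tau>s = ar R \<longrightarrow>
        inf (foldr inf (map2 eq \<sigma>s \<tau>s) top) (rel R \<sigma>s) \<le> rel R \<tau>s)"

text \<open>Well behaved: the value of every L_M-sentence lies in B. Since B is dense in its
  completion RO(B+), this is equivalent to: every supremum arising in the evaluation of
  an existential sentence exists in B (and then coincides with the one in RO(B+)).\<close>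
definition well_behaved :: "('r \<Rightarrow> nat) \<Rightarrow> ('m \<Rightarrow> 'm \<Rightarrow> 'b::boolean_algebra) \<Rightarrow> ('r \<Rightarrow> 'm list \<Rightarrow> 'b)
    \<Rightarrow> ('c \<Rightarrow> 'm) \<Rightarrow> bool" where
  "well_behaved ar eq rel cst \<longleftrightarrow>
     (\<forall>x p. wf ar p \<and> fv (Ex x p) = {} \<longrightarrow>
        (\<exists>b. is_sup (range (\<lambda>\<sigma>. bv eq rel cst (subst x \<sigma> p))) b))"

definition ultrafilter :: "'b::boolean_algebra set \<Rightarrow> bool" where
  "ultrafilter G \<longleftrightarrow> top \<in> G \<and> bot \<notin> G \<and>
     (\<forall>a\<in>G. \<forall>b\<in>G. inf a b \<in> G) \<and> (\<forall>a\<in>G. \<forall>b. a \<le> b \<longrightarrow> b \<in> G) \<and>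
     (\<forall>a. a \<in> G \<or> - a \<in> G)"

fun te :: "('c \<Rightarrow> 'd) \<Rightarrow> ('m \<Rightarrow> 'd) \<Rightarrow> (nat \<Rightarrow> 'd) \<Rightarrow> ('c, 'm) trm \<Rightarrow> 'd" where
  "te ci pi e (Var x) = e x"
| "te ci pi e (Cst c) = ci c"
| "te ci pi e (Par m) = pi m"

fun sat :: "'d set \<Rightarrow> ('r \<Rightarrow> 'd list \<Rightarrow> bool) \<Rightarrow> ('c \<Rightarrow> 'd) \<Rightarrow> ('m \<Rightarrow> 'd) \<Rightarrow> (nat \<Rightarrow> 'd)
    \<Rightarrow> ('r, 'c, 'm) fm \<Rightarrow> bool" where
  "sat D ri ci pi e (Eq t u) = (te ci pi e t = te ci pi e u)"
| "sat D ri ci pi e (Rel R ts) = ri R (map (te ci pi e) ts)"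
| "sat D ri ci pi e (And p q) = (sat D ri ci pi e p \<and> sat D ri ci pi e q)"
| "sat D ri ci pi e (Neg p) = (\<not> sat D ri ci pi e p)"
| "sat D ri ci pi e (Ex x p) = (\<exists>d\<in>D. sat D ri ci pi (e(x := d)) p)"

definition cls :: "('m \<Rightarrow> 'm \<Rightarrow> 'b) \<Rightarrow> 'b set \<Rightarrow> 'm \<Rightarrow> 'm set" where
  "cls eq G \<sigma> = {\<tau>. eq \<tau> \<sigma> \<in> G}"

definition qrel :: "('r \<Rightarrow> nat) \<Rightarrow> ('m \<Rightarrow> 'm \<Rightarrow> 'b) \<Rightarrow> ('r \<Rightarrow> 'm list \<Rightarrow> 'b) \<Rightarrow> 'b set
    \<Rightarrow> 'r \<Rightarrow> 'm set list \<Rightarrow> bool" where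
  "qrel ar eq rel G R ds \<longleftrightarrow>
     (\<exists>\<sigma>s. length \<sigma>s = ar R \<and> ds = map (cls eq G) \<sigma>s \<and> rel R \<sigma>s \<in> G)"

definition qsat :: "('r \<Rightarrow> nat) \<Rightarrow> ('m \<Rightarrow> 'm \<Rightarrow> 'b) \<Rightarrow> ('r \<Rightarrow> 'm list \<Rightarrow> 'b) \<Rightarrow> ('c \<Rightarrow> 'm)
    \<Rightarrow> 'b set \<Rightarrow> (nat \<Rightarrow> 'm set) \<Rightarrow> ('r, 'c, 'm) fm \<Rightarrow> bool" where
  "qsat ar eq rel cst G e p =
     sat (range (cls eq G)) (qrel ar eq rel G) (\<lambda>c. cls eq G (cst c)) (cls eq G) e p"

definition full :: "('r \<Rightarrow> nat) \<Rightarrow> ('m \<Rightarrow> 'm \<Rightarrow> 'b::boolean_algebra) \<Rightarrow> ('r \<Rightarrow> 'm list \<Rightarrow> 'b)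
    \<Rightarrow> ('c \<Rightarrow> 'm) \<Rightarrow> bool" where
  "full ar eq rel cst \<longleftrightarrow>
     (\<forall>G. ultrafilter G \<longrightarrow>
        (\<forall>p \<tau>. wf ar p \<and> pars p = {} \<longrightarrow>
           (qsat ar eq rel cst G (\<lambda>x. cls eq G (\<tau> x)) p
              \<longleftrightarrow> bv eq rel cst (substs (\<lambda>x. Some (\<tau> x)) p) \<in> G)))"

end

theory Submission
  imports Defs
begin

(* (b) implies (a) is Los's theorem for M/G, by induction on formulas. The only
   non-trivial case is the existential one, and there a supremum attained by finitely
   many values [[phi(sigma_i)]] lies in the ultrafilter G iff one of these values does.

   (a) implies (b): if the supremum b of the values [[phi(sigma)]] (which exists in B as
   M is well behaved) is not below any finite join of them, then b together with all
   complements -[[phi(sigma)]] generates a proper filter. An ultrafilter G extending it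
   contains [[exists x phi]] = b but no [[phi(sigma)]], so M/G |= exists x phi has no
   witness, contradicting fullness. Fullness only speaks about L-formulas; it transfers
   to L_M-formulas by replacing the parameters with fresh variables. *)

lemma substs_trm_substs_trm: "substs_trm t (substs_trm s u) = substs_trm (t ++ s) u"
  by (cases u) (auto simp: map_add_def split: option.splits)

lemma substs_substs: "substs t (substs s p) = substs (t ++ s) p"
proof (induction p arbitrary: s t)
  case (Ex x p)
  have "t(x := None) ++ s(x := None) = (t ++ s)(x := None)"
    by (auto simp: map_add_def fun_eq_iff split: option.split)
  then show ?case
    by (simp only: substs.simps Ex.IH)
qed (simp_all add: substs_trm_substs_trm)

lemma subst_substs_upd:
  "subst x \<sigma> (substs ((\<lambda>y. Some (\<tau> y))(x := None)) p) = substs (\<lambda>y. Some ((\<tau>(x := \<sigma>)) y)) p"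
proof -
  have "(\<lambda>_. None)(x := Some \<sigma>) ++ (\<lambda>y. Some (\<tau> y))(x := None) = (\<lambda>y. Some ((\<tau>(x := \<sigma>)) y))"
    by (auto simp: map_add_def)
  then show ?thesis
    by (simp add: subst_def substs_substs)
qed

lemma wf_substs [simp]: "wf ar (substs s p) = wf ar p"
  by (induction p arbitrary: s) auto

lemma fv_trm_substs_trm: "fv_trm (substs_trm s u) \<subseteq> {y \<in> fv_trm u. s y = None}"
  by (cases u) (auto split: option.splits)

lemma fv_substs: "fv (substs s p) \<subseteq> {y \<in> fv p. s y = None}"
proof (induction p arbitrary: s)
  case (Eq t u)
  then show ?case
    using fv_trm_substs_trm[of s t] fv_trm_substs_trm[of s u] by auto
next
  case (Rel R ts)
  then show ?case
    using fv_trm_substs_trm by fastforce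
next
  case (Ex x p)
  then show ?case by fastforce
qed auto

lemma te_substs_trm:
  "te ci pi e (substs_trm s t) = te ci pi (\<lambda>y. case s y of None \<Rightarrow> e y | Some m \<Rightarrow> pi m) t"
  by (cases t) (auto split: option.splits)

lemma sat_substs:
  "sat D ri ci pi e (substs s p) = sat D ri ci pi (\<lambda>y. case s y of None \<Rightarrow> e y | Some m \<Rightarrow> pi m) p"
proof (induction p arbitrary: s e)
  case (Ex x p)
  have "(\<lambda>y. case (s(x := None)) y of None \<Rightarrow> (e(x := d)) y | Some m \<Rightarrow> pi m)
      = (\<lambda>y. case s y of None \<Rightarrow> e y | Some m \<Rightarrow> pi m)(x := d)" for d
    by (auto simp: fun_eq_iff split: option.split)
  with Ex show ?case by simp
qed (simp_all add: te_substs_trm comp_def)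

lemma qsat_substs_Some:
  "qsat ar eq rel cst G e (substs (\<lambda>y. Some (\<tau> y)) p) = qsat ar eq rel cst G (\<lambda>y. cls eq G (\<tau> y)) p"
  by (simp add: qsat_def sat_substs)

lemma qsat_Ex:
  "qsat ar eq rel cst G (\<lambda>y. cls eq G (\<tau> y)) (Ex x p)
     \<longleftrightarrow> (\<exists>\<sigma>. qsat ar eq rel cst G (\<lambda>y. cls eq G ((\<tau>(x := \<sigma>)) y)) p)"
proof -
  have "(\<lambda>y. cls eq G (\<tau> y))(x := cls eq G \<sigma>) = (\<lambda>y. cls eq G ((\<tau>(x := \<sigma>)) y))" for \<sigma>
    by (auto simp: fun_eq_iff split: option.split)
  then show ?thesis
    by (auto simp: qsat_def)
qed

lemma the_is_sup: "is_sup S b \<Longrightarrow> (THE b. is_sup S b) = b"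
  by (rule the_equality) (auto simp: is_sup_def intro: order.antisym)

lemma bv_substs_Ex:
  "bv eq rel cst (substs (\<lambda>y. Some (\<tau> y)) (Ex x p))
     = (THE b. is_sup (range (\<lambda>\<sigma>. bv eq rel cst (substs (\<lambda>y. Some ((\<tau>(x := \<sigma>)) y)) p))) b)"
  by (simp add: subst_substs_upd)

fun abst_trm :: "('m \<Rightarrow> nat) \<Rightarrow> ('c, 'm) trm \<Rightarrow> ('c, 'm) trm" where
  "abst_trm f (Par m) = Var (f m)"
| "abst_trm f (Var x) = Var x"
| "abst_trm f (Cst c) = Cst c"

fun abst :: "('m \<Rightarrow> nat) \<Rightarrow> ('r, 'c, 'm) fm \<Rightarrow> ('r, 'c, 'm) fm" where
  "abst f (Eq t u) = Eq (abst_trm f t) (abst_trm f u)"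
| "abst f (Rel R ts) = Rel R (map (abst_trm f) ts)"
| "abst f (And p q) = And (abst f p) (abst f q)"
| "abst f (Neg p) = Neg (abst f p)"
| "abst f (Ex x p) = Ex x (abst f p)"

fun vars :: "('r, 'c, 'm) fm \<Rightarrow> nat set" where
  "vars (Eq t u) = fv_trm t \<union> fv_trm u"
| "vars (Rel R ts) = (\<Union>t\<in>set ts. fv_trm t)"
| "vars (And p q) = vars p \<union> vars q"
| "vars (Neg p) = vars p"
| "vars (Ex x p) = insert x (vars p)"

lemma pars_trm_abst_trm [simp]: "pars_trm (abst_trm f t) = {}"
  by (cases t) auto

lemma pars_abst [simp]: "pars (abst f p) = {}"
  by (induction p) auto

lemma wf_abst [simp]: "wf ar (abst f p) = wf ar p"
  by (induction p) auto

lemma finite_fv_trm [simp]: "finite (fv_trm t)"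
  by (cases t) auto

lemma finite_pars_trm [simp]: "finite (pars_trm t)"
  by (cases t) auto

lemma finite_vars: "finite (vars p)"
  by (induction p) auto

lemma finite_pars: "finite (pars p)"
  by (induction p) auto

lemma substs_trm_abst_trm:
  assumes "\<forall>m\<in>pars_trm u. s (f m) = Some m" and "\<forall>y\<in>fv_trm u. s y = s0 y"
  shows "substs_trm s (abst_trm f u) = substs_trm s0 u"
  using assms by (cases u) auto

lemma substs_abst:
  assumes "\<forall>m\<in>pars p. s (f m) = Some m \<and> f m \<notin> vars p" and "\<forall>y\<in>vars p. s y = s0 y"
  shows "substs s (abst f p) = substs s0 p"
  using assms
proof (induction p arbitrary: s s0)
  case (Eq t u)
  have "substs_trm s (abst_trm f v) = substs_trm s0 v" if "v \<in> {t, u}" for v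
    by (rule substs_trm_abst_trm) (use Eq.prems that in auto)
  then show ?case by simp
next
  case (Rel R ts)
  have "substs_trm s (abst_trm f t) = substs_trm s0 t" if "t \<in> set ts" for t
    by (rule substs_trm_abst_trm) (use Rel.prems that in auto)
  then show ?case by simp
next
  case (Ex x p)
  have "substs (s(x := None)) (abst f p) = substs (s0(x := None)) p"
    by (rule Ex.IH) (use Ex.prems in auto)
  then show ?case by simp
qed simp_all

text \<open>The parameters are sent to fresh variables, beyond all variables of \<open>p\<close>, so that
  no quantifier of \<open>p\<close> captures them.\<close>
lemma param_free_instance:
  fixes p :: "('r, 'c, 'm) fm"
  obtains p' \<tau>' where "pars p' = {}" and "wf ar p' = wf ar p"
    and "substs (\<lambda>y. Some (\<tau>' y)) p' = substs (\<lambda>y. Some (\<tau> y)) p"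
proof -
  obtain N where N: "\<forall>y\<in>vars p. y < N"
    using finite_vars[of p] unfolding finite_nat_set_iff_bounded by blast
  obtain h :: "'m \<Rightarrow> nat" where h: "inj_on h (pars p)"
    using finite_imp_inj_to_nat_seg[OF finite_pars[of p]] by blast
  define \<tau>' where "\<tau>' y = (if N \<le> y then inv_into (pars p) h (y - N) else \<tau> y)" for y
  have "substs (\<lambda>y. Some (\<tau>' y)) (abst (\<lambda>m. N + h m) p) = substs (\<lambda>y. Some (\<tau> y)) p"
    by (rule substs_abst) (use N h in \<open>auto simp: \<tau>'_def\<close>)
  with that show ?thesis
    by (metis pars_abst wf_abst)
qed

lemma foldr_sup_le_iff:
  "foldr sup (map a xs) bot \<le> (c :: 'b::boolean_algebra) \<longleftrightarrow> (\<forall>x\<in>set xs. a x \<le> c)"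
  by (induction xs) auto

lemma foldr_sup_append:
  "foldr sup (map a (xs @ ys)) bot
     = sup (foldr sup (map a xs) bot) (foldr sup (map a ys) bot :: 'b::boolean_algebra)"
  by (induction xs) (simp_all add: sup_assoc)

lemma is_sup_finite_join:
  assumes "is_sup (range a) b" and "b \<le> foldr sup (map a xs) bot"
  shows "is_sup (range a) (foldr sup (map a xs) bot)"
proof -
  have "foldr sup (map a xs) bot \<le> b"
    using assms(1) by (simp add: foldr_sup_le_iff is_sup_def)
  with assms show ?thesis
    using order.antisym by metis
qed

lemma ultrafilter_mono: "ultrafilter G \<Longrightarrow> a \<in> G \<Longrightarrow> a \<le> b \<Longrightarrow> b \<in> G"
  unfolding ultrafilter_def by blast

lemma ultrafilter_inf_iff: "ultrafilter G \<Longrightarrow> inf a b \<in> G \<longleftrightarrow> a \<in> G \<and> b \<in> G"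
  unfolding ultrafilter_def by (meson inf.cobounded1 inf.cobounded2)

lemma ultrafilter_compl_iff: "ultrafilter G \<Longrightarrow> - a \<in> G \<longleftrightarrow> a \<notin> G"
  unfolding ultrafilter_def by (metis inf_compl_bot)

lemma ultrafilter_sup_iff:
  assumes "ultrafilter G"
  shows "sup a b \<in> G \<longleftrightarrow> a \<in> G \<or> b \<in> G"
proof -
  have "- sup a b = inf (- a) (- b)"
    by simp
  then show ?thesis
    using ultrafilter_compl_iff[OF assms] ultrafilter_inf_iff[OF assms] by metis
qed

lemma ultrafilter_foldr_sup_iff:
  "ultrafilter G \<Longrightarrow> foldr sup (map a xs) bot \<in> G \<longleftrightarrow> (\<exists>x\<in>set xs. a x \<in> G)"
  by (induction xs) (auto simp: ultrafilter_sup_iff ultrafilter_def)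

lemma ultrafilter_finite_join_is_sup_iff:
  assumes "ultrafilter G" and "is_sup (range a) (foldr sup (map a xs) bot)"
  shows "foldr sup (map a xs) bot \<in> G \<longleftrightarrow> (\<exists>x. a x \<in> G)"
proof
  assume "\<exists>x. a x \<in> G"
  then obtain x where "a x \<in> G" ..
  moreover have "a x \<le> foldr sup (map a xs) bot"
    using assms(2) unfolding is_sup_def by simp
  ultimately show "foldr sup (map a xs) bot \<in> G"
    using assms(1) ultrafilter_mono by blast
next
  assume "foldr sup (map a xs) bot \<in> G"
  then show "\<exists>x. a x \<in> G"
    unfolding ultrafilter_foldr_sup_iff[OF assms(1)] by blast
qed

definition proper_filter :: "'b::boolean_algebra set \<Rightarrow> bool" where
  "proper_filter F \<longleftrightarrow> top \<in> F \<and> bot \<notin> F \<and>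
     (\<forall>a\<in>F. \<forall>b\<in>F. inf a b \<in> F) \<and> (\<forall>a\<in>F. \<forall>b. a \<le> b \<longrightarrow> b \<in> F)"

lemma ultrafilter_iff_proper_filter:
  "ultrafilter G \<longleftrightarrow> proper_filter G \<and> (\<forall>a. a \<in> G \<or> - a \<in> G)"
  unfolding ultrafilter_def proper_filter_def by (simp only: conj_assoc)

lemma proper_filter_Union_chain:
  assumes "C \<noteq> {}" and filters: "\<forall>F\<in>C. proper_filter F" and "chain\<^sub>\<subseteq> C"
  shows "proper_filter (\<Union>C)"
  unfolding proper_filter_def
proof (intro conjI ballI allI impI)
  obtain F where "F \<in> C"
    using assms(1) by blast
  then show "top \<in> \<Union>C"
    using filters unfolding proper_filter_def by blast
  show "bot \<notin> \<Union>C"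
    using filters unfolding proper_filter_def by blast
next
  fix a b assume "a \<in> \<Union>C" "b \<in> \<Union>C"
  then obtain F where "F \<in> C" "a \<in> F" "b \<in> F"
    using assms(3) unfolding chain_subset_def by blast
  moreover have "proper_filter F"
    using filters \<open>F \<in> C\<close> by blast
  ultimately show "inf a b \<in> \<Union>C"
    unfolding proper_filter_def by blast
next
  fix a b assume "a \<in> \<Union>C" "a \<le> b"
  then obtain F where "F \<in> C" "a \<in> F"
    by blast
  moreover have "proper_filter F"
    using filters \<open>F \<in> C\<close> by blast
  ultimately show "b \<in> \<Union>C"
    using \<open>a \<le> b\<close> unfolding proper_filter_def by blast
qed

lemma proper_filter_adjoin:
  assumes F: "proper_filter F" and "- x \<notin> F"
  shows "proper_filter {c. \<exists>m\<in>F. inf m x \<le> c}" (is "proper_filter ?F'")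
proof -
  have top: "top \<in> F" and inf_closed: "\<And>a b. a \<in> F \<Longrightarrow> b \<in> F \<Longrightarrow> inf a b \<in> F"
    and up: "\<And>a b. a \<in> F \<Longrightarrow> a \<le> b \<Longrightarrow> b \<in> F"
    using F unfolding proper_filter_def by blast+
  have "bot \<notin> ?F'"
  proof
    assume "bot \<in> ?F'"
    then obtain m where "m \<in> F" and "inf m x \<le> bot"
      by blast
    then have "m \<le> - x"
      by (simp add: inf_shunt bot_unique)
    with \<open>m \<in> F\<close> \<open>- x \<notin> F\<close> show False
      using up by blast
  qed
  moreover have "inf a b \<in> ?F'" if ab: "a \<in> ?F'" "b \<in> ?F'" for a b
  proof -
    obtain m n where "m \<in> F" "inf m x \<le> a" "n \<in> F" "inf n x \<le> b"
      using ab by blast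
    moreover have "inf (inf m n) x = inf (inf m x) (inf n x)"
      by (simp add: inf_aci)
    ultimately show ?thesis
      using inf_closed by (metis (mono_tags, lifting) inf_mono mem_Collect_eq)
  qed
  moreover have "top \<in> ?F'"
    using top by auto
  moreover have "b \<in> ?F'" if "a \<in> ?F'" and "a \<le> b" for a b
    using that order_trans by blast
  ultimately show ?thesis
    unfolding proper_filter_def by blast
qed

lemma maximal_proper_filter_is_ultrafilter:
  assumes F: "proper_filter F" and max: "\<forall>F'. proper_filter F' \<and> F \<subseteq> F' \<longrightarrow> F' = F"
  shows "ultrafilter F"
  unfolding ultrafilter_iff_proper_filter
proof (intro conjI allI F)
  fix x
  show "x \<in> F \<or> - x \<in> F"
  proof (rule disjCI)
    assume "- x \<notin> F"
    let ?F' = "{c. \<exists>m\<in>F. inf m x \<le> c}"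
    have "F \<subseteq> ?F'"
      by (blast intro: inf.cobounded1)
    with proper_filter_adjoin[OF F \<open>- x \<notin> F\<close>] have "?F' = F"
      using max by blast
    moreover have "x \<in> ?F'"
      using F unfolding proper_filter_def by auto
    ultimately show "x \<in> F"
      by simp
  qed
qed

lemma proper_filter_extends_to_ultrafilter:
  assumes "proper_filter F"
  obtains G where "ultrafilter G" and "F \<subseteq> G"
proof -
  let ?A = "{G. proper_filter G \<and> F \<subseteq> G}"
  have "\<forall>C\<in>chains ?A. \<exists>U\<in>?A. \<forall>X\<in>C. X \<subseteq> U"
  proof
    fix C assume C: "C \<in> chains ?A"
    show "\<exists>U\<in>?A. \<forall>X\<in>C. X \<subseteq> U"
    proof (cases "C = {}")
      case True
      with assms show ?thesis
        by blast
    next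
      case False
      have "C \<subseteq> ?A" and "chain\<^sub>\<subseteq> C"
        using C unfolding chains_def by auto
      with False have "proper_filter (\<Union>C)" and "F \<subseteq> \<Union>C"
        using proper_filter_Union_chain[of C] by auto
      then show ?thesis
        by blast
    qed
  qed
  from Zorn_Lemma2[OF this] obtain G where G: "G \<in> ?A" and max: "\<forall>X\<in>?A. G \<subseteq> X \<longrightarrow> X = G"
    by blast
  have "ultrafilter G"
  proof (rule maximal_proper_filter_is_ultrafilter)
    show "proper_filter G"
      using G by simp
    show "\<forall>F'. proper_filter F' \<and> G \<subseteq> F' \<longrightarrow> F' = G"
      using G max by auto
  qed
  with G that show ?thesis
    by blast
qed

lemma ultrafilter_avoiding_finite_joins:
  fixes b :: "'b::boolean_algebra"
  assumes nle: "\<forall>xs. \<not> b \<le> foldr sup (map a xs) bot"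
  obtains G where "ultrafilter G" and "b \<in> G" and "\<forall>x. a x \<notin> G"
proof -
  let ?J = "\<lambda>xs. foldr sup (map a xs) bot"
  let ?F = "{c. \<exists>xs. inf b (- ?J xs) \<le> c}"
  have "bot \<notin> ?F"
    using nle by (simp add: inf_shunt bot_unique)
  moreover have "inf c d \<in> ?F" if cd: "c \<in> ?F" "d \<in> ?F" for c d
  proof -
    obtain xs ys where "inf b (- ?J xs) \<le> c" and "inf b (- ?J ys) \<le> d"
      using cd by blast
    moreover have "inf b (- ?J (xs @ ys)) = inf (inf b (- ?J xs)) (inf b (- ?J ys))"
      unfolding foldr_sup_append by (simp add: inf_aci)
    ultimately show ?thesis
      by (metis (mono_tags, lifting) inf_mono mem_Collect_eq)
  qed
  moreover have "d \<in> ?F" if "c \<in> ?F" and "c \<le> d" for c d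
    using that order_trans by blast
  ultimately have "proper_filter ?F"
    unfolding proper_filter_def by auto
  then obtain G where G: "ultrafilter G" and "?F \<subseteq> G"
    by (rule proper_filter_extends_to_ultrafilter)
  moreover have "b \<in> ?F"
    by (auto intro!: exI[of _ "[]"])
  moreover have "- a x \<in> ?F" for x
    by (auto intro!: exI[of _ "[x]"])
  ultimately show ?thesis
    using that ultrafilter_compl_iff[OF G] by blast
qed

lemma cls_eq_iff:
  assumes M: "bvmodel ar eq rel" and G: "ultrafilter G"
  shows "cls eq G \<sigma> = cls eq G \<tau> \<longleftrightarrow> eq \<sigma> \<tau> \<in> G"
proof
  assume "cls eq G \<sigma> = cls eq G \<tau>"
  moreover have "\<sigma> \<in> cls eq G \<sigma>"
    using M G unfolding cls_def bvmodel_def ultrafilter_def by simp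
  ultimately show "eq \<sigma> \<tau> \<in> G"
    unfolding cls_def by auto
next
  assume st: "eq \<sigma> \<tau> \<in> G"
  moreover have "eq \<tau> \<sigma> \<in> G"
    using st M unfolding bvmodel_def by metis
  moreover have "inf (eq \<rho> \<sigma>) (eq \<sigma> \<tau>) \<le> eq \<rho> \<tau>" and "inf (eq \<rho> \<tau>) (eq \<tau> \<sigma>) \<le> eq \<rho> \<sigma>" for \<rho>
    using M unfolding bvmodel_def by blast+
  ultimately show "cls eq G \<sigma> = cls eq G \<tau>"
    unfolding cls_def using ultrafilter_inf_iff[OF G] ultrafilter_mono[OF G] by blast
qed

lemma foldr_inf_map2_eq_mem:
  assumes M: "bvmodel ar eq rel" and G: "ultrafilter G"
    and "length \<sigma>s = length \<tau>s" and "map (cls eq G) \<sigma>s = map (cls eq G) \<tau>s"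
  shows "foldr inf (map2 eq \<sigma>s \<tau>s) top \<in> G"
  using assms(3,4)
proof (induction \<sigma>s \<tau>s rule: list_induct2)
  case Nil
  then show ?case
    using G by (simp add: ultrafilter_def)
next
  case (Cons \<sigma> \<sigma>s \<tau> \<tau>s)
  then show ?case
    using cls_eq_iff[OF M G] ultrafilter_inf_iff[OF G] by simp
qed

lemma qrel_cls_iff:
  assumes M: "bvmodel ar eq rel" and G: "ultrafilter G" and len: "length \<tau>s = ar R"
  shows "qrel ar eq rel G R (map (cls eq G) \<tau>s) \<longleftrightarrow> rel R \<tau>s \<in> G"
proof
  assume "qrel ar eq rel G R (map (cls eq G) \<tau>s)"
  then obtain \<sigma>s where \<sigma>s: "length \<sigma>s = ar R" "map (cls eq G) \<sigma>s = map (cls eq G) \<tau>s"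
    and "rel R \<sigma>s \<in> G"
    unfolding qrel_def by auto
  moreover have "foldr inf (map2 eq \<sigma>s \<tau>s) top \<in> G"
    using foldr_inf_map2_eq_mem[OF M G] \<sigma>s len by simp
  moreover have "inf (foldr inf (map2 eq \<sigma>s \<tau>s) top) (rel R \<sigma>s) \<le> rel R \<tau>s"
    using M \<sigma>s len unfolding bvmodel_def by simp
  ultimately show "rel R \<tau>s \<in> G"
    using ultrafilter_inf_iff[OF G] ultrafilter_mono[OF G] by blast
next
  assume "rel R \<tau>s \<in> G"
  with len show "qrel ar eq rel G R (map (cls eq G) \<tau>s)"
    unfolding qrel_def by blast
qed

lemma te_cls:
  "te (\<lambda>c. cls eq G (cst c)) (cls eq G) (\<lambda>y. cls eq G (\<tau> y)) t
     = cls eq G (tm cst (substs_trm (\<lambda>y. Some (\<tau> y)) t))"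
  by (cases t) auto

definition sup_attained_finitely :: "('m \<Rightarrow> 'b::boolean_algebra) \<Rightarrow> bool" where
  "sup_attained_finitely a \<longleftrightarrow> (\<exists>\<sigma>s. is_sup (range a) (foldr sup (map a \<sigma>s) bot))"

theorem los_qsat_iff_bv_mem:
  assumes M: "bvmodel ar eq rel" and G: "ultrafilter G"
    and attained: "\<And>p x \<tau>. wf ar p \<Longrightarrow>
      sup_attained_finitely (\<lambda>\<sigma>. bv eq rel cst (substs (\<lambda>y. Some ((\<tau>(x := \<sigma>)) y)) p))"
    and "wf ar p"
  shows "qsat ar eq rel cst G (\<lambda>y. cls eq G (\<tau> y)) p \<longleftrightarrow> bv eq rel cst (substs (\<lambda>y. Some (\<tau> y)) p) \<in> G"
  using \<open>wf ar p\<close>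
proof (induction p arbitrary: \<tau>)
  case (Eq t u)
  then show ?case
    unfolding qsat_def using cls_eq_iff[OF M G] by (simp add: te_cls)
next
  case (Rel R ts)
  let ?\<tau>s = "map (tm cst \<circ> substs_trm (\<lambda>y. Some (\<tau> y))) ts"
  have te: "map (te (\<lambda>c. cls eq G (cst c)) (cls eq G) (\<lambda>y. cls eq G (\<tau> y))) ts = map (cls eq G) ?\<tau>s"
    by (simp add: te_cls)
  have "length ?\<tau>s = ar R"
    using Rel by simp
  then show ?case
    unfolding qsat_def sat.simps te substs.simps bv.simps map_map[of "tm cst"] by (rule qrel_cls_iff[OF M G])
next
  case (And p q)
  then show ?case
    unfolding qsat_def using ultrafilter_inf_iff[OF G] by simp
next
  case (Neg p)
  then show ?case
    unfolding qsat_def using ultrafilter_compl_iff[OF G] by simp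
next
  case (Ex x p)
  define a where "a \<sigma> = bv eq rel cst (substs (\<lambda>y. Some ((\<tau>(x := \<sigma>)) y)) p)" for \<sigma>
  obtain \<sigma>s where sup: "is_sup (range a) (foldr sup (map a \<sigma>s) bot)"
    using attained Ex.prems unfolding a_def sup_attained_finitely_def by fastforce
  have "qsat ar eq rel cst G (\<lambda>y. cls eq G (\<tau> y)) (Ex x p) \<longleftrightarrow> (\<exists>\<sigma>. a \<sigma> \<in> G)"
    unfolding qsat_Ex a_def using Ex by simp
  also have "\<dots> \<longleftrightarrow> foldr sup (map a \<sigma>s) bot \<in> G"
    using ultrafilter_finite_join_is_sup_iff[OF G sup] by simp
  also have "foldr sup (map a \<sigma>s) bot = bv eq rel cst (substs (\<lambda>y. Some (\<tau> y)) (Ex x p))"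
    unfolding bv_substs_Ex a_def[symmetric] using the_is_sup[OF sup] by simp
  finally show ?case .
qed

lemma full_qsat_iff_bv_mem:
  assumes "full ar eq rel cst" and "ultrafilter G" and "wf ar p"
  shows "qsat ar eq rel cst G (\<lambda>y. cls eq G (\<tau> y)) p \<longleftrightarrow> bv eq rel cst (substs (\<lambda>y. Some (\<tau> y)) p) \<in> G"
proof -
  obtain p' \<tau>' where "pars p' = {}" and "wf ar p' = wf ar p"
    and p': "substs (\<lambda>y. Some (\<tau>' y)) p' = substs (\<lambda>y. Some (\<tau> y)) p"
    by (rule param_free_instance)
  then have "qsat ar eq rel cst G (\<lambda>y. cls eq G (\<tau>' y)) p'
      \<longleftrightarrow> bv eq rel cst (substs (\<lambda>y. Some (\<tau>' y)) p') \<in> G"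
    using assms unfolding full_def by blast
  moreover have "qsat ar eq rel cst G (\<lambda>y. cls eq G (\<tau>' y)) p' = qsat ar eq rel cst G (\<lambda>y. cls eq G (\<tau> y)) p"
    by (metis p' qsat_substs_Some)
  ultimately show ?thesis
    by (simp add: p')
qed

lemma full_imp_sup_attained_finitely:
  assumes full: "full ar eq rel cst" and wb: "well_behaved ar eq rel cst" and "wf ar p"
  shows "sup_attained_finitely (\<lambda>\<sigma>. bv eq rel cst (substs (\<lambda>y. Some ((\<tau>(x := \<sigma>)) y)) p))"
    (is "sup_attained_finitely ?a")
proof (rule ccontr)
  assume not_attained: "\<not> sup_attained_finitely ?a"
  let ?q = "substs ((\<lambda>y. Some (\<tau> y))(x := None)) p"
  have "fv (Ex x ?q) = {}"
    using fv_substs[of "(\<lambda>y. Some (\<tau> y))(x := None)" p] by (auto split: if_splits)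
  moreover have "(\<lambda>\<sigma>. bv eq rel cst (subst x \<sigma> ?q)) = ?a"
    by (simp only: subst_substs_upd)
  ultimately obtain b where b: "is_sup (range ?a) b"
    using wb \<open>wf ar p\<close> wf_substs unfolding well_behaved_def by metis
  then have "\<forall>\<sigma>s. \<not> b \<le> foldr sup (map ?a \<sigma>s) bot"
    using not_attained is_sup_finite_join unfolding sup_attained_finitely_def by blast
  then obtain G where G: "ultrafilter G" and "b \<in> G" and no_witness: "\<forall>\<sigma>. ?a \<sigma> \<notin> G"
    by (rule ultrafilter_avoiding_finite_joins)
  have "bv eq rel cst (substs (\<lambda>y. Some (\<tau> y)) (Ex x p)) = b"
    unfolding bv_substs_Ex using the_is_sup[OF b] .
  with \<open>b \<in> G\<close> have "qsat ar eq rel cst G (\<lambda>y. cls eq G (\<tau> y)) (Ex x p)"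
    using full_qsat_iff_bv_mem[OF full G] \<open>wf ar p\<close> by simp
  then obtain \<sigma> where "qsat ar eq rel cst G (\<lambda>y. cls eq G ((\<tau>(x := \<sigma>)) y)) p"
    unfolding qsat_Ex ..
  then have "?a \<sigma> \<in> G"
    using full_qsat_iff_bv_mem[OF full G \<open>wf ar p\<close>] by blast
  with no_witness show False
    by blast
qed

theorem mainTheorem2:
  fixes ar :: "'r \<Rightarrow> nat"
    and eq :: "'m \<Rightarrow> 'm \<Rightarrow> 'b::boolean_algebra"
    and rel :: "'r \<Rightarrow> 'm list \<Rightarrow> 'b"
    and cst :: "'c \<Rightarrow> 'm"
  assumes "bvmodel ar eq rel"
    and "well_behaved ar eq rel cst"
  shows "full ar eq rel cst \<longleftrightarrow>
    (\<forall>(p :: ('r, 'c, 'm) fm) x0 (\<tau> :: nat \<Rightarrow> 'm). wf ar p \<longrightarrow>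
       (let q = substs (\<lambda>y. if y = x0 then None else Some (\<tau> y)) p in
        \<exists>\<sigma>s :: 'm list.
          is_sup (range (\<lambda>\<sigma>. bv eq rel cst (subst x0 \<sigma> q)))
                 (foldr sup (map (\<lambda>\<sigma>. bv eq rel cst (subst x0 \<sigma> q)) \<sigma>s) bot)))"
proof -
  let ?attained = "\<forall>(p :: ('r, 'c, 'm) fm) x \<tau>. wf ar p \<longrightarrow>
    sup_attained_finitely (\<lambda>\<sigma>. bv eq rel cst (substs (\<lambda>y. Some ((\<tau>(x := \<sigma>)) y)) p))"
  have "full ar eq rel cst \<longleftrightarrow> ?attained"
    using los_qsat_iff_bv_mem[OF assms(1)] full_imp_sup_attained_finitely[OF _ assms(2)]
    unfolding full_def by blast
  then show ?thesis
    by (simp add: subst_substs_upd[unfolded fun_upd_def] sup_attained_finitely_def)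
qed

end
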